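(* Let $\gamma\in(0,2/f_{\max})$. The map $\mathcal T:\mathbb S^{N\times N}\to\mathbb S^{N\times N}$, $\mathcal T(\tilde h)=\mathcal P\big(\gamma\tilde X_R+\tilde h-\gamma(\mathcal F(\tilde h)-\tfrac12)\big)$, is a contraction on the set of real matrices in $\mathbb S^{N\times N}$ with respect to the Frobenius distance.
   Context: $M,N$ positive integers with $N>2M$; $g$ is a real $M\times M$ image with values in $[0,255]$ zero-padded to $N\times N$, $\tilde g=\tilde g_R+j\tilde g_I$ its $N\times N$ 2D-DFT $\mathfrak F(g)$, and $\tilde X_R=\mathbb 1(\tilde g_R+W_R+d_R>0)-\tfrac12$ entrywise, where $W_R$ is independent zero-mean noise of known distribution symmetric about $0$ and $d_R$ independent AWGN dither, ensuring the total noise density is positive on the signal range. $\mathcal F$ is the CDF and $f$ the PDF of the total noise, applied entrywise; $f_{\max}$ is the maximum of $f$ over the region within the bounds of the signal. $\mathbb S=[-255N^2,255N^2]$. $\mathcal P(\tilde h)=\mathfrak F(\textsc{Clip}(\textsc{Proj}(\mathfrak F^{-1}(\tilde h))))$, where $\textsc{Proj}$ zeroes spatial-domain pixels outside the support region (the $2M^2$ pixels of the image block and its reflection $(n_1,n_2)\mapsto(-n_1\bmod N,-n_2\bmod N)$) and $\textsc{Clip}$ clips entries to $[0,255]$. *)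

theory Defs
  imports "HOL-Probability.Probability"
begin

type_synonym cmat = "nat \<times> nat \<Rightarrow> complex"
type_synonym rmat = "nat \<times> nat \<Rightarrow> real"

text \<open>Unnormalised N x N 2D DFT and its inverse (indices 0..N-1; entries outside are irrelevant).\<close>
definition dft2 :: "nat \<Rightarrow> cmat \<Rightarrow> cmat" where
  "dft2 N x = (\<lambda>(k1, k2). \<Sum>n1<N. \<Sum>n2<N.
      x (n1, n2) * cis (- 2 * pi * real (k1 * n1 + k2 * n2) / real N))"

definition idft2 :: "nat \<Rightarrow> cmat \<Rightarrow> cmat" where
  "idft2 N y = (\<lambda>(n1, n2). (1 / of_nat (N^2)) * (\<Sum>k1<N. \<Sum>k2<N.
      y (k1, k2) * cis (2 * pi * real (k1 * n1 + k2 * n2) / real N)))"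

definition support_region :: "nat \<Rightarrow> nat \<Rightarrow> (nat \<times> nat) set" where
  "support_region N M = {(n1, n2). n1 < M \<and> n2 < M}
     \<union> {((N - n1) mod N, (N - n2) mod N) | n1 n2. n1 < M \<and> n2 < M}"

definition proj_supp :: "nat \<Rightarrow> nat \<Rightarrow> cmat \<Rightarrow> cmat" where
  "proj_supp N M x = (\<lambda>p. if p \<in> support_region N M then x p else 0)"

text \<open>Entrywise clipping to [0,255] (nearest point of the segment [0,255] in the complex plane).\<close>
definition clip255 :: "complex \<Rightarrow> complex" where
  "clip255 z = complex_of_real (max 0 (min 255 (Re z)))"

definition P_op :: "nat \<Rightarrow> nat \<Rightarrow> cmat \<Rightarrow> cmat" where
  "P_op N M h = dft2 N (\<lambda>p. clip255 (proj_supp N M (idft2 N h) p))"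

definition zero_pad :: "nat \<Rightarrow> rmat \<Rightarrow> cmat" where
  "zero_pad M g = (\<lambda>(n1, n2). if n1 < M \<and> n2 < M then complex_of_real (g (n1, n2)) else 0)"

text \<open>1-bit measurements of the real part of the DFT (for realisations W, d of the noises).\<close>
definition Xr :: "nat \<Rightarrow> nat \<Rightarrow> rmat \<Rightarrow> rmat \<Rightarrow> rmat \<Rightarrow> rmat" where
  "Xr N M g W d = (\<lambda>p. (if Re (dft2 N (zero_pad M g) p) + W p + d p > 0 then 1 else 0) - 1/2)"

definition noise_cdf :: "real measure \<Rightarrow> real \<Rightarrow> real \<Rightarrow> real" where
  "noise_cdf \<mu> \<sigma> x = measure (distr (\<mu> \<Otimes>\<^sub>M density lborel (normal_density 0 \<sigma>)) borel
      (\<lambda>(w, e). w + e)) {..x}"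

definition noise_pdf :: "real measure \<Rightarrow> real \<Rightarrow> real \<Rightarrow> real" where
  "noise_pdf \<mu> \<sigma> x = (\<integral>w. normal_density 0 \<sigma> (x - w) \<partial>\<mu>)"

definition sig_range :: "nat \<Rightarrow> real set" where
  "sig_range N = {- 255 * real (N^2) .. 255 * real (N^2)}"

definition f_max :: "real measure \<Rightarrow> real \<Rightarrow> nat \<Rightarrow> real" where
  "f_max \<mu> \<sigma> N = (SUP x\<in>sig_range N. noise_pdf \<mu> \<sigma> x)"

definition T_op :: "nat \<Rightarrow> nat \<Rightarrow> real measure \<Rightarrow> real \<Rightarrow> real \<Rightarrow> rmat \<Rightarrow> cmat \<Rightarrow> cmat" where
  "T_op N M \<mu> \<sigma> \<gamma> X h = P_op N M (\<lambda>p. complex_of_real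
      (\<gamma> * X p + Re (h p) - \<gamma> * (noise_cdf \<mu> \<sigma> (Re (h p)) - 1/2)))"

definition real_S_mats :: "nat \<Rightarrow> cmat set" where
  "real_S_mats N = {h. \<forall>i<N. \<forall>j<N. Im (h (i, j)) = 0 \<and> Re (h (i, j)) \<in> sig_range N}"

definition frob_dist :: "nat \<Rightarrow> cmat \<Rightarrow> cmat \<Rightarrow> real" where
  "frob_dist N A B = sqrt (\<Sum>i<N. \<Sum>j<N. (cmod (A (i, j) - B (i, j)))^2)"

definition is_contraction_on :: "nat \<Rightarrow> cmat set \<Rightarrow> (cmat \<Rightarrow> cmat) \<Rightarrow> bool" where
  "is_contraction_on N D T \<longleftrightarrow> T ` D \<subseteq> D \<and>
     (\<exists>L. 0 \<le> L \<and> L < 1 \<and> (\<forall>a\<in>D. \<forall>b\<in>D. frob_dist N (T a) (T b) \<le> L * frob_dist N a b))"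

end

theory Submission
  imports Defs
begin

text \<open>
  \<open>T\<close> is the map \<open>P\<close> applied to the entrywise update \<open>h \<mapsto> \<gamma> X + \<gamma>/2 + \<phi>(h)\<close> with
  \<open>\<phi>(x) = x - \<gamma> F(x)\<close>. Since \<open>F(s) - F(t)\<close> is the integral of the noise density \<open>f\<close> over
  \<open>(t, s]\<close>, and on the compact range \<open>S\<close> the Gaussian dither keeps \<open>f\<close> above some \<open>c > 0\<close>
  while \<open>f \<le> f\<^sub>m\<^sub>a\<^sub>x\<close>, the map \<open>\<phi>\<close> is Lipschitz on \<open>S\<close> with constant
  \<open>max (1 - \<gamma> c) (\<gamma> f\<^sub>m\<^sub>a\<^sub>x - 1) < 1\<close>.
  \<open>P\<close> is nonexpansive for the Frobenius distance: by Parseval the DFT multiplies distances by \<open>N\<close>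
  and its inverse by \<open>1/N\<close>, while support projection and clipping act entrywise and are
  nonexpansive. Finally \<open>P\<close> maps real matrices into real matrices with entries in \<open>S\<close>: the
  support is invariant under \<open>n \<mapsto> -n mod N\<close>, so the clipped image of a real spectrum is real and
  reflection symmetric, hence has a real DFT, each entry of which is a sum of \<open>N\<^sup>2\<close> terms of
  modulus at most 255.
\<close>

section \<open>Parseval identity for the 2D DFT\<close>

abbreviation grid :: "nat \<Rightarrow> (nat \<times> nat) set" where
  "grid N \<equiv> {..<N} \<times> {..<N}"

lemma frob_dist_eq_sum_grid: "frob_dist N A B = sqrt (\<Sum>p\<in>grid N. (cmod (A p - B p))^2)"
  unfolding frob_dist_def sum.cartesian_product by (simp add: case_prod_beta)

lemma frob_dist_le_pointwise:
  assumes "0 \<le> L" and "\<And>p. p \<in> grid N \<Longrightarrow> cmod (A p - B p) \<le> L * cmod (C p - D p)"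
  shows "frob_dist N A B \<le> L * frob_dist N C D"
proof -
  have "(\<Sum>p\<in>grid N. (cmod (A p - B p))^2) \<le> (\<Sum>p\<in>grid N. L^2 * (cmod (C p - D p))^2)"
  proof (rule sum_mono)
    fix p assume "p \<in> grid N"
    then have "(cmod (A p - B p))^2 \<le> (L * cmod (C p - D p))^2"
      using assms(2) by (intro power_mono) auto
    then show "(cmod (A p - B p))^2 \<le> L^2 * (cmod (C p - D p))^2"
      by (simp add: power_mult_distrib)
  qed
  then have "frob_dist N A B \<le> sqrt (L^2 * (\<Sum>p\<in>grid N. (cmod (C p - D p))^2))"
    unfolding frob_dist_eq_sum_grid sum_distrib_left by (rule real_sqrt_le_mono)
  then show ?thesis
    unfolding frob_dist_eq_sum_grid real_sqrt_mult using assms(1) by simp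
qed

lemma cis_2pi_div_cong:
  fixes a b q :: int
  assumes "N > 0" and "a = b + int N * q"
  shows "cis (2 * pi * of_int a / real N) = cis (2 * pi * of_int b / real N)"
proof -
  have "2 * pi * of_int a / real N = 2 * pi * of_int b / real N + 2 * pi * of_int q"
    using assms by (simp add: field_simps)
  moreover have "cis (2 * pi * of_int q) = 1" by (rule cis_multiple_2pi) simp
  ultimately show ?thesis by (simp add: cis_mult[symmetric])
qed

lemma sum_roots_of_unity_eq_0:
  fixes d :: int
  assumes "d \<noteq> 0" and "\<bar>d\<bar> < int N"
  shows "(\<Sum>k<N. cis (2 * pi * real k * of_int d / real N)) = 0"
proof -
  have N: "N > 0" using assms by linarith
  define z where "z = cis (2 * pi * of_int d / real N)"
  have pow: "z ^ k = cis (2 * pi * real k * of_int d / real N)" for k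
    unfolding z_def Complex.DeMoivre by (simp add: mult_ac)
  have "z \<noteq> 1"
  proof
    assume "z = 1"
    then obtain n :: int where n: "2 * pi * of_int d / real N = of_int (2 * n) * pi"
      unfolding z_def cis_conv_exp exp_eq_1 by auto
    then have "of_int d = real N * of_int n"
      using N by (simp add: field_simps)
    then have "d = int N * n"
      by (metis of_int_eq_iff of_int_mult of_int_of_nat_eq)
    then show False
      using assms by (cases "n = 0") (auto simp: abs_mult)
  qed
  moreover have "z ^ N = 1"
  proof -
    have "2 * pi * real N * of_int d / real N = 2 * pi * of_int d"
      using N by simp
    then show ?thesis
      unfolding pow by simp
  qed
  ultimately have "(\<Sum>k<N. z ^ k) = 0"
    using geometric_sum[of z N] by simp
  then show ?thesis
    by (simp add: pow)
qed

lemma sum_cis_orthogonal: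
  assumes "n < N" and "m < N"
  shows "(\<Sum>k<N. cis (2 * pi * real k * (real n - real m) / real N))
    = (if n = m then of_nat N else 0)"
  using assms sum_roots_of_unity_eq_0[of "int n - int m" N] by (cases "n = m") auto

definition dft_kernel :: "nat \<Rightarrow> nat \<times> nat \<Rightarrow> nat \<times> nat \<Rightarrow> complex" where
  "dft_kernel N k n = cis (2 * pi * real (fst k * fst n + snd k * snd n) / real N)"

lemma dft_kernel_commute: "dft_kernel N k n = dft_kernel N n k"
  unfolding dft_kernel_def by (simp add: mult.commute)

lemma dft_kernel_mult_cnj:
  "dft_kernel N k n * cnj (dft_kernel N k m) =
     cis (2 * pi * real (fst k) * (real (fst n) - real (fst m)) / real N) *
     cis (2 * pi * real (snd k) * (real (snd n) - real (snd m)) / real N)"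
proof -
  have "2 * pi * real (fst k * fst n + snd k * snd n) / real N
        - 2 * pi * real (fst k * fst m + snd k * snd m) / real N
      = 2 * pi * real (fst k) * (real (fst n) - real (fst m)) / real N
        + 2 * pi * real (snd k) * (real (snd n) - real (snd m)) / real N"
    by (simp add: add_divide_distrib[symmetric] diff_divide_distrib[symmetric] algebra_simps)
  then show ?thesis
    unfolding dft_kernel_def cis_cnj cis_mult by simp
qed

lemma dft_kernel_orthogonal:
  assumes "n \<in> grid N" and "m \<in> grid N"
  shows "(\<Sum>k\<in>grid N. dft_kernel N k n * cnj (dft_kernel N k m))
    = (if n = m then of_nat (N^2) else 0)"
proof -
  have "(\<Sum>k\<in>grid N. dft_kernel N k n * cnj (dft_kernel N k m))
      = (\<Sum>k1<N. cis (2 * pi * real k1 * (real (fst n) - real (fst m)) / real N)) *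
        (\<Sum>k2<N. cis (2 * pi * real k2 * (real (snd n) - real (snd m)) / real N))"
    unfolding dft_kernel_mult_cnj sum.cartesian_product sum_product by (simp add: case_prod_beta)
  also have "\<dots> = (if n = m then of_nat (N^2) else 0)"
    using assms sum_cis_orthogonal[of "fst n" N "fst m"] sum_cis_orthogonal[of "snd n" N "snd m"]
    by (auto simp: prod_eq_iff power2_eq_square)
  finally show ?thesis .
qed

lemma dft_kernel_parseval:
  "(\<Sum>k\<in>grid N. (cmod (\<Sum>n\<in>grid N. u n * dft_kernel N k n))^2)
    = real (N^2) * (\<Sum>n\<in>grid N. (cmod (u n))^2)"
proof -
  have sq: "(complex_of_real (cmod z))^2 = z * cnj z" for z
    using complex_norm_square[of z] by simp
  have "complex_of_real (\<Sum>k\<in>grid N. (cmod (\<Sum>n\<in>grid N. u n * dft_kernel N k n))^2)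
      = (\<Sum>k\<in>grid N. \<Sum>n\<in>grid N. \<Sum>m\<in>grid N.
           u n * cnj (u m) * (dft_kernel N k n * cnj (dft_kernel N k m)))"
    by (simp add: sq cnj_sum sum_product algebra_simps)
  also have "\<dots> = (\<Sum>n\<in>grid N. \<Sum>m\<in>grid N.
      u n * cnj (u m) * (\<Sum>k\<in>grid N. dft_kernel N k n * cnj (dft_kernel N k m)))"
  proof -
    have "(\<Sum>k\<in>grid N. \<Sum>n\<in>grid N. \<Sum>m\<in>grid N.
           u n * cnj (u m) * (dft_kernel N k n * cnj (dft_kernel N k m)))
        = (\<Sum>n\<in>grid N. \<Sum>m\<in>grid N. \<Sum>k\<in>grid N.
           u n * cnj (u m) * (dft_kernel N k n * cnj (dft_kernel N k m)))"
      by (subst sum.swap) (rule sum.cong[OF refl], rule sum.swap)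
    then show ?thesis
      by (simp only: sum_distrib_left)
  qed
  also have "\<dots> = (\<Sum>n\<in>grid N. \<Sum>m\<in>grid N. u n * cnj (u m) * (if n = m then of_nat (N^2) else 0))"
    by (intro sum.cong refl) (simp add: dft_kernel_orthogonal)
  also have "\<dots> = (\<Sum>n\<in>grid N. u n * cnj (u n) * of_nat (N^2))"
    by (simp add: if_distrib sum.delta cong: if_cong)
  also have "\<dots> = complex_of_real (real (N^2) * (\<Sum>n\<in>grid N. (cmod (u n))^2))"
    by (simp add: sq sum_distrib_left mult_ac)
  finally show ?thesis by (simp only: of_real_eq_iff)
qed

lemma dft2_eq_kernel_sum: "dft2 N x k = (\<Sum>n\<in>grid N. x n * cnj (dft_kernel N k n))"
  unfolding dft2_def dft_kernel_def cis_cnj sum.cartesian_product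
  by (cases k) (simp add: case_prod_beta)

lemma idft2_eq_kernel_sum:
  "idft2 N y n = (1 / of_nat (N^2)) * (\<Sum>k\<in>grid N. y k * dft_kernel N n k)"
  unfolding idft2_def dft_kernel_def sum.cartesian_product
  by (cases n) (simp add: case_prod_beta mult.commute)

lemma dft2_diff: "dft2 N x k - dft2 N x' k = dft2 N (\<lambda>p. x p - x' p) k"
  unfolding dft2_eq_kernel_sum by (simp add: sum_subtractf left_diff_distrib)

lemma idft2_diff: "idft2 N y n - idft2 N y' n = idft2 N (\<lambda>p. y p - y' p) n"
  unfolding idft2_eq_kernel_sum by (simp add: sum_subtractf left_diff_distrib right_diff_distrib)

lemma frob_dist_dft2: "frob_dist N (dft2 N x) (dft2 N x') = real N * frob_dist N x x'"
proof -
  have "cmod (dft2 N x k - dft2 N x' k)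
      = cmod (\<Sum>n\<in>grid N. cnj (x n - x' n) * dft_kernel N k n)" for k
    unfolding dft2_diff unfolding dft2_eq_kernel_sum
    by (subst complex_mod_cnj[symmetric]) (simp add: cnj_sum)
  then show ?thesis
    unfolding frob_dist_eq_sum_grid
    by (simp add: dft_kernel_parseval real_sqrt_mult flip: complex_cnj_diff)
qed

lemma frob_dist_idft2: "frob_dist N (idft2 N y) (idft2 N y') = frob_dist N y y' / real N"
proof (cases "N = 0")
  case True
  then show ?thesis by (simp add: frob_dist_def)
next
  case False
  have "cmod (idft2 N y n - idft2 N y' n)
      = cmod (\<Sum>k\<in>grid N. (y k - y' k) * dft_kernel N n k) / real N ^ 2" for n
    unfolding idft2_diff unfolding idft2_eq_kernel_sum by (simp add: norm_mult norm_divide norm_power)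
  then have "(\<Sum>n\<in>grid N. (cmod (idft2 N y n - idft2 N y' n))^2)
      = (\<Sum>n\<in>grid N. (cmod (\<Sum>k\<in>grid N. (y k - y' k) * dft_kernel N n k))^2) / (real N ^ 2)^2"
    by (simp add: power_divide sum_divide_distrib)
  also have "\<dots> = (\<Sum>k\<in>grid N. (cmod (y k - y' k))^2) / real N ^ 2"
    using False by (subst dft_kernel_parseval) (simp add: power2_eq_square)
  finally show ?thesis
    unfolding frob_dist_eq_sum_grid by (simp add: real_sqrt_divide)
qed

section \<open>The projection P\<close>

definition reflect :: "nat \<Rightarrow> nat \<times> nat \<Rightarrow> nat \<times> nat" where
  "reflect N n = ((N - fst n) mod N, (N - snd n) mod N)"

lemma diff_mod_diff_mod_self: "(a::nat) < N \<Longrightarrow> (N - (N - a) mod N) mod N = a"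
  by (cases "a = 0") auto

lemma reflect_in_grid: "n \<in> grid N \<Longrightarrow> reflect N n \<in> grid N"
  unfolding reflect_def by auto

lemma reflect_reflect: "n \<in> grid N \<Longrightarrow> reflect N (reflect N n) = n"
  unfolding reflect_def by (cases n) (simp add: diff_mod_diff_mod_self)

lemma dft_kernel_reflect:
  assumes "n \<in> grid N"
  shows "dft_kernel N k (reflect N n) = cnj (dft_kernel N k n)"
proof -
  obtain a b where n: "n = (a, b)" "a < N" "b < N" using assms by auto
  obtain k1 k2 where k: "k = (k1, k2)" by (cases k)
  \<comment> \<open>\<open>(N - a) mod N\<close> is \<open>N - a\<close> unless \<open>a = 0\<close>, so reflection negates the exponent modulo \<open>N\<close>.\<close>
  define q where "q = (if a = 0 then 0 else int k1) + (if b = 0 then 0 else int k2)"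
  have "int (k1 * ((N - a) mod N) + k2 * ((N - b) mod N)) = - int (k1 * a + k2 * b) + int N * q"
    using n unfolding q_def by (auto simp: mod_if of_nat_diff algebra_simps)
  from cis_2pi_div_cong[OF _ this] n(2)
  have "cis (2 * pi * real (k1 * ((N - a) mod N) + k2 * ((N - b) mod N)) / real N)
      = cis (- (2 * pi * real (k1 * a + k2 * b) / real N))"
    by (simp add: minus_divide_left algebra_simps)
  then show ?thesis
    unfolding dft_kernel_def reflect_def cis_cnj n k by simp
qed

lemma reflect_in_support_region_iff:
  assumes "M < N" and "n \<in> grid N"
  shows "reflect N n \<in> support_region N M \<longleftrightarrow> n \<in> support_region N M"
proof -
  have closed: "reflect N p \<in> support_region N M" if "p \<in> support_region N M" for p
    using that assms(1) unfolding support_region_def reflect_def by (auto simp: diff_mod_diff_mod_self)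
  show ?thesis
    using closed[of n] closed[of "reflect N n"] reflect_reflect[OF assms(2)] by auto
qed

lemma idft2_reflect:
  assumes "\<And>k. Im (y k) = 0" and "n \<in> grid N"
  shows "idft2 N y (reflect N n) = cnj (idft2 N y n)"
proof -
  have "cnj (y k) = y k" for k
    using assms(1) by (simp add: complex_eq_iff)
  moreover have "dft_kernel N (reflect N n) k = cnj (dft_kernel N n k)" for k
    using dft_kernel_reflect[OF assms(2)] dft_kernel_commute by metis
  ultimately show ?thesis
    unfolding idft2_eq_kernel_sum by (simp add: cnj_sum)
qed

lemma Im_dft2_of_reflection_symmetric:
  assumes "\<And>n. Im (x n) = 0" and "\<And>n. n \<in> grid N \<Longrightarrow> x (reflect N n) = x n"
  shows "Im (dft2 N x k) = 0"
proof -
  have "dft2 N x k = (\<Sum>n\<in>grid N. x (reflect N n) * dft_kernel N k (reflect N n))"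
    unfolding dft2_eq_kernel_sum using assms(2)
    by (intro sum.cong refl) (simp add: dft_kernel_reflect)
  also have "\<dots> = (\<Sum>n\<in>grid N. x n * dft_kernel N k n)"
    by (rule sum.reindex_bij_witness[where i="reflect N" and j="reflect N"])
       (auto simp: reflect_reflect reflect_in_grid)
  also have "\<dots> = cnj (dft2 N x k)"
    using assms(1) unfolding dft2_eq_kernel_sum by (simp add: cnj_sum complex_eq_iff)
  finally show ?thesis
    by (simp add: complex_eq_iff)
qed

lemma Im_P_op:
  assumes "M < N" and "\<And>k. Im (y k) = 0"
  shows "Im (P_op N M y k) = 0"
  unfolding P_op_def
proof (rule Im_dft2_of_reflection_symmetric)
  fix n assume n: "n \<in> grid N"
  have "Re (idft2 N y (reflect N n)) = Re (idft2 N y n)"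
    using idft2_reflect[OF assms(2) n] by simp
  then show "clip255 (proj_supp N M (idft2 N y) (reflect N n)) = clip255 (proj_supp N M (idft2 N y) n)"
    unfolding proj_supp_def clip255_def using reflect_in_support_region_iff[OF assms(1) n] by simp
qed (simp add: clip255_def)

lemma cmod_P_op_le: "cmod (P_op N M y k) \<le> 255 * real (N^2)"
proof -
  have "cmod (P_op N M y k) \<le> (\<Sum>n\<in>grid N. cmod (clip255 (proj_supp N M (idft2 N y) n)))"
    unfolding P_op_def dft2_eq_kernel_sum
    by (rule order_trans[OF norm_sum]) (simp add: norm_mult dft_kernel_def)
  also have "\<dots> \<le> (\<Sum>n\<in>grid N. 255)"
    by (intro sum_mono) (simp add: clip255_def)
  finally show ?thesis
    by (simp add: power2_eq_square)
qed

lemma P_op_in_real_S_mats: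
  assumes "M < N" and "\<And>p. Im (y p) = 0"
  shows "P_op N M y \<in> real_S_mats N"
proof -
  have "Re (P_op N M y p) \<in> sig_range N" for p
    using abs_Re_le_cmod[of "P_op N M y p"] cmod_P_op_le[of N M y p]
    unfolding sig_range_def by (auto simp: abs_le_iff)
  moreover have "Im (P_op N M y p) = 0" for p
    by (rule Im_P_op[OF assms])
  ultimately show ?thesis
    unfolding real_S_mats_def by simp
qed

lemma cmod_clip255_diff_le: "cmod (clip255 z - clip255 w) \<le> cmod (z - w)"
proof -
  have "cmod (clip255 z - clip255 w) = \<bar>max 0 (min 255 (Re z)) - max 0 (min 255 (Re w))\<bar>"
    unfolding clip255_def by (simp flip: of_real_diff)
  also have "\<dots> \<le> \<bar>Re (z - w)\<bar>"
    by (auto simp: max_def min_def)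
  also have "\<dots> \<le> cmod (z - w)"
    by (rule abs_Re_le_cmod)
  finally show ?thesis .
qed

lemma frob_dist_P_op_le: "frob_dist N (P_op N M y) (P_op N M y') \<le> frob_dist N y y'"
proof (cases "N = 0")
  case True
  then show ?thesis by (simp add: frob_dist_def)
next
  case False
  have "frob_dist N (P_op N M y) (P_op N M y')
      = real N * frob_dist N (\<lambda>p. clip255 (proj_supp N M (idft2 N y) p))
                              (\<lambda>p. clip255 (proj_supp N M (idft2 N y') p))"
    unfolding P_op_def by (rule frob_dist_dft2)
  also have "\<dots> \<le> real N * frob_dist N (idft2 N y) (idft2 N y')"
  proof (intro mult_left_mono frob_dist_le_pointwise[where L=1, simplified])
    fix p
    show "cmod (clip255 (proj_supp N M (idft2 N y) p) - clip255 (proj_supp N M (idft2 N y') p))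
        \<le> cmod (idft2 N y p - idft2 N y' p)"
      by (cases "p \<in> support_region N M") (simp_all add: proj_supp_def cmod_clip255_diff_le)
  qed simp
  also have "\<dots> = frob_dist N y y'"
    using False by (simp add: frob_dist_idft2)
  finally show ?thesis .
qed

lemma is_contraction_on_P_op_entrywise:
  fixes \<phi> :: "real \<Rightarrow> real" and \<kappa> :: rmat
  assumes "M < N" and "0 \<le> L" and "L < 1"
    and lip: "\<And>a b. a \<in> sig_range N \<Longrightarrow> b \<in> sig_range N \<Longrightarrow> \<bar>\<phi> a - \<phi> b\<bar> \<le> L * \<bar>a - b\<bar>"
  shows "is_contraction_on N (real_S_mats N)
    (\<lambda>h. P_op N M (\<lambda>p. complex_of_real (\<kappa> p + \<phi> (Re (h p)))))"
  unfolding is_contraction_on_def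
proof (intro conjI exI[of _ L] ballI image_subsetI assms(2,3) P_op_in_real_S_mats[OF assms(1)])
  fix a b assume a: "a \<in> real_S_mats N" and b: "b \<in> real_S_mats N"
  have "cmod (complex_of_real (\<kappa> p + \<phi> (Re (a p))) - complex_of_real (\<kappa> p + \<phi> (Re (b p))))
      \<le> L * cmod (a p - b p)" if "p \<in> grid N" for p
  proof -
    have "Im (a p) = 0" "Re (a p) \<in> sig_range N" "Im (b p) = 0" "Re (b p) \<in> sig_range N"
      using a b that by (auto simp: real_S_mats_def)
    then show ?thesis
      using lip[of "Re (a p)" "Re (b p)"] by (simp add: cmod_eq_Re flip: of_real_diff)
  qed
  then show "frob_dist N (P_op N M (\<lambda>p. complex_of_real (\<kappa> p + \<phi> (Re (a p)))))
      (P_op N M (\<lambda>p. complex_of_real (\<kappa> p + \<phi> (Re (b p))))) \<le> L * frob_dist N a b"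
    by (intro order_trans[OF frob_dist_P_op_le frob_dist_le_pointwise[OF assms(2)]])
qed simp

section \<open>The noise distribution and the entrywise update\<close>

lemma sub_scaled_lipschitz_of_slope_bounds:
  fixes F :: "real \<Rightarrow> real"
  assumes "0 < \<gamma>" and "a \<in> A" and "b \<in> A"
    and slope: "\<And>s t. s \<in> A \<Longrightarrow> t \<in> A \<Longrightarrow> t \<le> s \<Longrightarrow>
      c * (s - t) \<le> F s - F t \<and> F s - F t \<le> C * (s - t)"
  shows "\<bar>(a - \<gamma> * F a) - (b - \<gamma> * F b)\<bar> \<le> max (1 - \<gamma> * c) (\<gamma> * C - 1) * \<bar>a - b\<bar>"
proof -
  define L where "L = max (1 - \<gamma> * c) (\<gamma> * C - 1)"
  have ordered: "\<bar>(s - \<gamma> * F s) - (t - \<gamma> * F t)\<bar> \<le> L * (s - t)"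
    if "s \<in> A" "t \<in> A" "t \<le> s" for s t
  proof -
    have "\<gamma> * (c * (s - t)) \<le> \<gamma> * (F s - F t)" "\<gamma> * (F s - F t) \<le> \<gamma> * (C * (s - t))"
      using slope[OF that] \<open>0 < \<gamma>\<close> by (auto intro: mult_left_mono)
    moreover have "(1 - \<gamma> * c) * (s - t) \<le> L * (s - t)" "(\<gamma> * C - 1) * (s - t) \<le> L * (s - t)"
      unfolding L_def using \<open>t \<le> s\<close> by (auto intro: mult_right_mono)
    ultimately show ?thesis
      by (auto simp: algebra_simps abs_le_iff)
  qed
  show ?thesis
  proof (cases "b \<le> a")
    case True
    then show ?thesis using ordered[OF assms(2,3)] by (simp add: L_def)
  next
    case False
    then show ?thesis using ordered[OF assms(3,2)] by (simp add: L_def abs_minus_commute)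
  qed
qed

lemma normal_density_le_of_abs_le:
  assumes "0 < \<sigma>" and "\<bar>x\<bar> \<le> \<bar>y\<bar>"
  shows "normal_density 0 \<sigma> y \<le> normal_density 0 \<sigma> x"
proof -
  have "x^2 \<le> y^2"
    using assms(2) by (simp add: abs_le_square_iff)
  then have "- (y^2) / (2 * \<sigma>^2) \<le> - (x^2) / (2 * \<sigma>^2)"
    using assms(1) by (intro divide_right_mono) auto
  then show ?thesis
    unfolding normal_density_def by (intro mult_left_mono) auto
qed

lemma noise_pdf_nonneg: "0 \<le> noise_pdf \<mu> \<sigma> u"
  unfolding noise_pdf_def by (rule Bochner_Integration.integral_nonneg) simp

lemma prob_space_ex_Icc_measure_pos:
  fixes \<mu> :: "real measure"
  assumes "prob_space \<mu>" and "sets \<mu> = sets borel"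
  shows "\<exists>n::nat. 0 < measure \<mu> {- real n .. real n}"
proof (rule ccontr)
  interpret prob_space \<mu> by fact
  assume "\<not> ?thesis"
  then have "{- real n .. real n} \<in> null_sets \<mu>" for n :: nat
    using assms(2) by (auto simp: null_sets_def emeasure_eq_measure zero_less_measure_iff)
  then have "(\<Union>n::nat. {- real n .. real n}) \<in> null_sets \<mu>"
    by (rule null_sets_UN)
  moreover have "(\<Union>n::nat. {- real n .. real n}) = space \<mu>"
  proof -
    have "x \<in> (\<Union>n::nat. {- real n .. real n})" for x :: real
    proof -
      obtain n :: nat where "\<bar>x\<bar> \<le> real n"
        using real_arch_simple by blast
      then show ?thesis
        by (intro UN_I[of n]) auto
    qed
    then show ?thesis
      using sets_eq_imp_space_eq[OF assms(2)] by auto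
  qed
  ultimately show False
    using emeasure_space_1 by (simp add: null_sets_def)
qed

lemma emeasure_density_normal_translate:
  assumes [measurable]: "A \<in> sets borel"
  shows "emeasure (density lborel (normal_density 0 \<sigma>)) {e. w + e \<in> A}
    = (\<integral>\<^sup>+u. ennreal (normal_density 0 \<sigma> (u - w)) * indicator A u \<partial>lborel)"
proof -
  have "emeasure (density lborel (normal_density 0 \<sigma>)) {e. w + e \<in> A}
      = (\<integral>\<^sup>+e. ennreal (normal_density 0 \<sigma> e) * indicator A (w + e) \<partial>lborel)"
    by (subst emeasure_density) (auto intro!: nn_integral_cong simp: indicator_def)
  also have "\<dots> = (\<integral>\<^sup>+u. ennreal (normal_density 0 \<sigma> (u - w)) * indicator A u \<partial>lborel)"
    using nn_integral_real_affine[of "\<lambda>e. ennreal (normal_density 0 \<sigma> e) * indicator A (w + e)" 1 "- w"]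
    by simp
  finally show ?thesis .
qed

context
  fixes \<mu> :: "real measure" and \<sigma> :: real
  assumes prob: "prob_space \<mu>" and sets_\<mu>: "sets \<mu> = sets borel" and \<sigma>: "0 < \<sigma>"
begin

lemma integrable_normal_density_shift: "integrable \<mu> (\<lambda>w. normal_density 0 \<sigma> (u - w))"
proof -
  interpret prob_space \<mu> by (rule prob)
  show ?thesis
  proof (rule integrable_const_bound[where B="normal_density 0 \<sigma> 0"])
    show "AE w in \<mu>. norm (normal_density 0 \<sigma> (u - w)) \<le> normal_density 0 \<sigma> 0"
      using normal_density_le_of_abs_le[OF \<sigma>] by simp
    show "(\<lambda>w. normal_density 0 \<sigma> (u - w)) \<in> borel_measurable \<mu>"
      by (subst measurable_cong_sets[OF sets_\<mu> refl]) simp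
  qed
qed

lemma nn_integral_normal_density_shift:
  "(\<integral>\<^sup>+w. ennreal (normal_density 0 \<sigma> (u - w)) \<partial>\<mu>) = ennreal (noise_pdf \<mu> \<sigma> u)"
  unfolding noise_pdf_def
  by (rule nn_integral_eq_integral[OF integrable_normal_density_shift]) simp

lemma borel_measurable_noise_pdf: "noise_pdf \<mu> \<sigma> \<in> borel_measurable borel"
proof -
  interpret prob_space \<mu> by (rule prob)
  have "(\<lambda>(u, w). normal_density 0 \<sigma> (u - w)) \<in> borel_measurable (borel \<Otimes>\<^sub>M \<mu>)"
    by (subst measurable_cong_sets[OF sets_pair_measure_cong[OF refl sets_\<mu>] refl]) simp
  then show ?thesis
    unfolding noise_pdf_def by (rule borel_measurable_lebesgue_integral)
qed

lemma noise_pdf_le_f_max: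
  assumes "u \<in> sig_range N"
  shows "noise_pdf \<mu> \<sigma> u \<le> f_max \<mu> \<sigma> N"
proof -
  interpret prob_space \<mu> by (rule prob)
  have "noise_pdf \<mu> \<sigma> v \<le> normal_density 0 \<sigma> 0" for v
  proof -
    have "noise_pdf \<mu> \<sigma> v \<le> (\<integral>w. normal_density 0 \<sigma> 0 \<partial>\<mu>)"
      unfolding noise_pdf_def
      by (rule integral_mono[OF integrable_normal_density_shift])
         (auto intro: normal_density_le_of_abs_le[OF \<sigma>])
    then show ?thesis by (simp add: prob_space)
  qed
  then show ?thesis
    unfolding f_max_def by (intro cSUP_upper[OF assms] bdd_aboveI2)
qed

lemma noise_pdf_uniform_lower_bound: "\<exists>c>0. \<forall>u. \<bar>u\<bar> \<le> K \<longrightarrow> c \<le> noise_pdf \<mu> \<sigma> u"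
proof -
  interpret prob_space \<mu> by (rule prob)
  obtain n :: nat where "0 < measure \<mu> {- real n .. real n}"
    using prob_space_ex_Icc_measure_pos[OF prob sets_\<mu>] ..
  define A where "A = {- real n .. real n}"
  have A: "A \<in> sets \<mu>"
    unfolding A_def using sets_\<mu> by simp
  define c where "c = normal_density 0 \<sigma> (\<bar>K\<bar> + real n) * measure \<mu> A"
  have "c > 0"
    unfolding c_def A_def using normal_density_pos[OF \<sigma>] \<open>0 < measure \<mu> _\<close> by simp
  moreover have "c \<le> noise_pdf \<mu> \<sigma> u" if "\<bar>u\<bar> \<le> K" for u
  proof -
    have "ennreal c = (\<integral>\<^sup>+w. ennreal (normal_density 0 \<sigma> (\<bar>K\<bar> + real n)) * indicator A w \<partial>\<mu>)"
      using A unfolding c_def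
      by (simp add: nn_integral_cmult_indicator emeasure_eq_measure ennreal_mult)
    also have "\<dots> \<le> (\<integral>\<^sup>+w. ennreal (normal_density 0 \<sigma> (u - w)) \<partial>\<mu>)"
    proof (intro nn_integral_mono)
      fix w
      have "\<bar>u - w\<bar> \<le> \<bar>\<bar>K\<bar> + real n\<bar>" if "w \<in> A"
        using that \<open>\<bar>u\<bar> \<le> K\<close> unfolding A_def by auto
      then show "ennreal (normal_density 0 \<sigma> (\<bar>K\<bar> + real n)) * indicator A w
          \<le> ennreal (normal_density 0 \<sigma> (u - w))"
        using normal_density_le_of_abs_le[OF \<sigma>] by (auto simp: indicator_def ennreal_leI)
    qed
    also have "\<dots> = ennreal (noise_pdf \<mu> \<sigma> u)"
      by (rule nn_integral_normal_density_shift)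
    finally show ?thesis
      using noise_pdf_nonneg by (simp add: ennreal_le_iff)
  qed
  ultimately show ?thesis by blast
qed

lemma distr_add_normal_eq_density:
  "distr (\<mu> \<Otimes>\<^sub>M density lborel (normal_density 0 \<sigma>)) borel (\<lambda>(w, e). w + e)
    = density lborel (noise_pdf \<mu> \<sigma>)"
proof -
  interpret M: prob_space \<mu> by (rule prob)
  define G where "G = density lborel (normal_density 0 \<sigma>)"
  interpret G: prob_space G
    unfolding G_def by (rule prob_space_normal_density[OF \<sigma>])
  interpret pair_sigma_finite \<mu> lborel ..
  have sets_pair: "sets (\<mu> \<Otimes>\<^sub>M G) = sets (borel \<Otimes>\<^sub>M borel)"
    by (rule sets_pair_measure_cong[OF sets_\<mu>]) (simp add: G_def)
  have space_pair: "space (\<mu> \<Otimes>\<^sub>M G) = UNIV"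
    using sets_eq_imp_space_eq[OF sets_pair] by (simp add: space_pair_measure)
  have add: "(\<lambda>(w, e). w + e) \<in> \<mu> \<Otimes>\<^sub>M G \<rightarrow>\<^sub>M borel"
    by (subst measurable_cong_sets[OF sets_pair refl]) simp
  show ?thesis
    unfolding G_def[symmetric]
  proof (rule measure_eqI)
    fix A assume "A \<in> sets (distr (\<mu> \<Otimes>\<^sub>M G) borel (\<lambda>(w, e). w + e))"
    then have A[measurable]: "A \<in> sets borel" by simp
    have "emeasure (distr (\<mu> \<Otimes>\<^sub>M G) borel (\<lambda>(w, e). w + e)) A
        = emeasure (\<mu> \<Otimes>\<^sub>M G) ((\<lambda>(w, e). w + e) -` A \<inter> space (\<mu> \<Otimes>\<^sub>M G))"
      by (rule emeasure_distr[OF add A])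
    also have "\<dots> = (\<integral>\<^sup>+w. emeasure G {e. w + e \<in> A} \<partial>\<mu>)"
      using G.emeasure_pair_measure_alt[OF measurable_sets[OF add A]]
      by (simp add: space_pair vimage_def)
    also have "\<dots> = (\<integral>\<^sup>+w. \<integral>\<^sup>+u. ennreal (normal_density 0 \<sigma> (u - w)) * indicator A u \<partial>lborel \<partial>\<mu>)"
      unfolding G_def by (simp add: emeasure_density_normal_translate)
    also have "\<dots> = (\<integral>\<^sup>+u. \<integral>\<^sup>+w. ennreal (normal_density 0 \<sigma> (u - w)) * indicator A u \<partial>\<mu> \<partial>lborel)"
      by (rule Fubini'[symmetric])
         (subst measurable_cong_sets[OF sets_pair_measure_cong[OF sets_\<mu> sets_lborel] refl], simp)
    also have "\<dots> = (\<integral>\<^sup>+u. ennreal (noise_pdf \<mu> \<sigma> u) * indicator A u \<partial>lborel)"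
    proof (rule nn_integral_cong)
      fix u
      have "(\<integral>\<^sup>+w. ennreal (normal_density 0 \<sigma> (u - w)) * indicator A u \<partial>\<mu>)
          = (\<integral>\<^sup>+w. ennreal (normal_density 0 \<sigma> (u - w)) \<partial>\<mu>) * indicator A u"
        by (rule nn_integral_multc) (subst measurable_cong_sets[OF sets_\<mu> refl], simp)
      then show "(\<integral>\<^sup>+w. ennreal (normal_density 0 \<sigma> (u - w)) * indicator A u \<partial>\<mu>)
          = ennreal (noise_pdf \<mu> \<sigma> u) * indicator A u"
        by (simp add: nn_integral_normal_density_shift)
    qed
    also have "\<dots> = emeasure (density lborel (noise_pdf \<mu> \<sigma>)) A"
      using borel_measurable_noise_pdf by (simp add: emeasure_density)
    finally show "emeasure (distr (\<mu> \<Otimes>\<^sub>M G) borel (\<lambda>(w, e). w + e)) A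
        = emeasure (density lborel (noise_pdf \<mu> \<sigma>)) A" .
  qed simp
qed

lemma prob_space_density_noise_pdf: "prob_space (density lborel (noise_pdf \<mu> \<sigma>))"
  unfolding distr_add_normal_eq_density[symmetric]
proof (rule prob_space.prob_space_distr)
  show "prob_space (\<mu> \<Otimes>\<^sub>M density lborel (normal_density 0 \<sigma>))"
    by (intro prob_space_pair prob prob_space_normal_density \<sigma>)
  show "(\<lambda>(w, e). w + e) \<in> \<mu> \<Otimes>\<^sub>M density lborel (normal_density 0 \<sigma>) \<rightarrow>\<^sub>M borel"
    by (subst measurable_cong_sets[OF sets_pair_measure_cong[OF sets_\<mu>, of _ lborel] refl]) simp_all
qed

lemma noise_cdf_diff_bounds:
  assumes "t \<le> s" and "0 \<le> c"
    and pdf: "\<And>u. u \<in> {t<..s} \<Longrightarrow> c \<le> noise_pdf \<mu> \<sigma> u \<and> noise_pdf \<mu> \<sigma> u \<le> C"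
  shows "c * (s - t) \<le> noise_cdf \<mu> \<sigma> s - noise_cdf \<mu> \<sigma> t"
    and "noise_cdf \<mu> \<sigma> s - noise_cdf \<mu> \<sigma> t \<le> C * (s - t)"
proof -
  define D where "D = density lborel (noise_pdf \<mu> \<sigma>)"
  interpret D: prob_space D
    unfolding D_def by (rule prob_space_density_noise_pdf)
  have "noise_cdf \<mu> \<sigma> s - noise_cdf \<mu> \<sigma> t = measure D ({..s} - {..t})"
    unfolding noise_cdf_def distr_add_normal_eq_density D_def[symmetric] using assms(1)
    by (subst D.finite_measure_Diff) (auto simp: D_def)
  also have "{..s} - {..t} = {t<..s}"
    by auto
  finally have diff: "noise_cdf \<mu> \<sigma> s - noise_cdf \<mu> \<sigma> t = measure D {t<..s}" .
  have emeasure_D: "emeasure D {t<..s} = (\<integral>\<^sup>+u. ennreal (noise_pdf \<mu> \<sigma> u) * indicator {t<..s} u \<partial>lborel)"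
    unfolding D_def using borel_measurable_noise_pdf by (simp add: emeasure_density)
  have "ennreal (c * (s - t)) = (\<integral>\<^sup>+u. ennreal c * indicator {t<..s} u \<partial>lborel)"
    using assms(1,2) by (simp add: nn_integral_cmult_indicator ennreal_mult)
  also have "\<dots> \<le> emeasure D {t<..s}"
    unfolding emeasure_D using pdf by (intro nn_integral_mono) (auto simp: indicator_def ennreal_leI)
  finally show "c * (s - t) \<le> noise_cdf \<mu> \<sigma> s - noise_cdf \<mu> \<sigma> t"
    unfolding diff D.emeasure_eq_measure by (simp add: ennreal_le_iff)
  show "noise_cdf \<mu> \<sigma> s - noise_cdf \<mu> \<sigma> t \<le> C * (s - t)"
  proof (cases "t = s")
    case False
    then have "s \<in> {t<..s}"
      using assms(1) by auto
    then have "0 \<le> C"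
      using pdf assms(2) by force
    have "emeasure D {t<..s} \<le> (\<integral>\<^sup>+u. ennreal C * indicator {t<..s} u \<partial>lborel)"
      unfolding emeasure_D using pdf by (intro nn_integral_mono) (auto simp: indicator_def ennreal_leI)
    also have "\<dots> = ennreal (C * (s - t))"
      using assms(1) \<open>0 \<le> C\<close> by (simp add: nn_integral_cmult_indicator ennreal_mult)
    finally show ?thesis
      unfolding diff D.emeasure_eq_measure using assms(1) \<open>0 \<le> C\<close> by (simp add: ennreal_le_iff)
  qed (simp add: diff)
qed

lemma noise_pdf_bounds_on_sig_range:
  "\<exists>c>0. \<forall>u\<in>sig_range N. c \<le> noise_pdf \<mu> \<sigma> u \<and> noise_pdf \<mu> \<sigma> u \<le> f_max \<mu> \<sigma> N"
proof -
  obtain c where "0 < c" and c: "\<forall>u. \<bar>u\<bar> \<le> 255 * real (N^2) \<longrightarrow> c \<le> noise_pdf \<mu> \<sigma> u"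
    using noise_pdf_uniform_lower_bound by blast
  have "c \<le> noise_pdf \<mu> \<sigma> u \<and> noise_pdf \<mu> \<sigma> u \<le> f_max \<mu> \<sigma> N" if "u \<in> sig_range N" for u
    using c that noise_pdf_le_f_max[OF that] unfolding sig_range_def by auto
  with \<open>0 < c\<close> show ?thesis by blast
qed

lemma sub_scaled_noise_cdf_lipschitz:
  assumes "0 < \<gamma>" and "0 \<le> c" and "a \<in> {l..r}" and "b \<in> {l..r}"
    and pdf: "\<And>u. u \<in> {l..r} \<Longrightarrow> c \<le> noise_pdf \<mu> \<sigma> u \<and> noise_pdf \<mu> \<sigma> u \<le> C"
  shows "\<bar>(a - \<gamma> * noise_cdf \<mu> \<sigma> a) - (b - \<gamma> * noise_cdf \<mu> \<sigma> b)\<bar>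
    \<le> max (1 - \<gamma> * c) (\<gamma> * C - 1) * \<bar>a - b\<bar>"
  using assms(1,3,4)
proof (rule sub_scaled_lipschitz_of_slope_bounds)
  fix s t assume "s \<in> {l..r}" "t \<in> {l..r}" "t \<le> s"
  then have "c \<le> noise_pdf \<mu> \<sigma> u \<and> noise_pdf \<mu> \<sigma> u \<le> C" if "u \<in> {t<..s}" for u
    using pdf that by auto
  then show "c * (s - t) \<le> noise_cdf \<mu> \<sigma> s - noise_cdf \<mu> \<sigma> t
      \<and> noise_cdf \<mu> \<sigma> s - noise_cdf \<mu> \<sigma> t \<le> C * (s - t)"
    using noise_cdf_diff_bounds[OF \<open>t \<le> s\<close> assms(2)] by blast
qed

end

theorem lemma3:
  fixes M N :: nat and g W d :: rmat and \<mu> :: "real measure" and \<sigma> \<gamma> :: real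
  assumes "0 < M" and "2 * M < N"
    and "\<And>i j. i < M \<Longrightarrow> j < M \<Longrightarrow> g (i, j) \<in> {0..255}"
    and "prob_space \<mu>" and "sets \<mu> = sets borel"
    and "distr \<mu> borel uminus = \<mu>"
    and "integrable \<mu> (\<lambda>x. x)" and "(\<integral>x. x \<partial>\<mu>) = 0"
    and "0 < \<sigma>"
    and "0 < \<gamma>" and "\<gamma> < 2 / f_max \<mu> \<sigma> N"
  shows "is_contraction_on N (real_S_mats N) (T_op N M \<mu> \<sigma> \<gamma> (Xr N M g W d))"
proof -
  obtain c where "0 < c"
    and pdf: "\<forall>u\<in>sig_range N. c \<le> noise_pdf \<mu> \<sigma> u \<and> noise_pdf \<mu> \<sigma> u \<le> f_max \<mu> \<sigma> N"
    using noise_pdf_bounds_on_sig_range[OF assms(4,5,9)] by blast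
  define C where "C = f_max \<mu> \<sigma> N"
  define L where "L = max (1 - \<gamma> * c) (\<gamma> * C - 1)"
  have "0 \<in> sig_range N"
    unfolding sig_range_def by simp
  then have "c \<le> C" and "\<gamma> * C < 2"
    using pdf \<open>0 < c\<close> assms(10,11) unfolding C_def by (auto simp: field_simps)
  moreover have "0 < \<gamma> * c" and "\<gamma> * c \<le> \<gamma> * C"
    using \<open>0 < c\<close> \<open>c \<le> C\<close> assms(10) by simp_all
  ultimately have "0 \<le> L" and "L < 1"
    unfolding L_def by auto
  have T_op_eq: "T_op N M \<mu> \<sigma> \<gamma> (Xr N M g W d) = (\<lambda>h. P_op N M (\<lambda>p. complex_of_real
      ((\<gamma> * Xr N M g W d p + \<gamma> / 2) + (Re (h p) - \<gamma> * noise_cdf \<mu> \<sigma> (Re (h p))))))"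
    unfolding T_op_def by (intro ext arg_cong[where f="P_op N M"]) (simp add: algebra_simps)
  show ?thesis
    unfolding T_op_eq
  proof (rule is_contraction_on_P_op_entrywise[OF _ \<open>0 \<le> L\<close> \<open>L < 1\<close>])
    fix a b assume "a \<in> sig_range N" and "b \<in> sig_range N"
    then show "\<bar>(a - \<gamma> * noise_cdf \<mu> \<sigma> a) - (b - \<gamma> * noise_cdf \<mu> \<sigma> b)\<bar> \<le> L * \<bar>a - b\<bar>"
      unfolding L_def C_def using \<open>0 < c\<close> pdf assms(4,5,9,10)
      by (intro sub_scaled_noise_cdf_lipschitz) (auto simp: sig_range_def)
  qed (use assms(2) in simp)
qed

end
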